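(* Let $\mathbf{k}$ be a field, let $d \geq 1$, let $A = \mathbf{k}^{d}$, and assume that $\mathbf{k}$ has a full set of $d$-th roots of unity (i.e. $d$ distinct $d$-th roots of unity). Let $M$ be a finite-dimensional $\mathbf{k}$-vector space and let $\phi : A \to \mathrm{End}_{\mathbf{k}}(M)$ be a minimal-characteristic morphism. Then $\phi$ is a (unital) $\mathbf{k}$-algebra homomorphism.
   Context: For $a \in A$, let $\overline{\chi}_a(t) \in \mathbf{k}[t]$ denote the minimal polynomial of the left multiplication operator $\mu_L(a) : A \to A$, $x \mapsto ax$, and $\chi_a(t)$ its characteristic polynomial. A $\mathbf{k}$-linear map $\phi : A \to \mathrm{End}_{\mathbf{k}}(M)$ is called a characteristic morphism if $\chi_a(\phi(a)) = 0$ for all $a \in A$, and a minimal-characteristic morphism if moreover $\overline{\chi}_a(\phi(a)) = 0$ for all $a \in A$. *)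

theory Defs
  imports "Jordan_Normal_Form.Char_Poly"
begin

text \<open>The algebra A = k^d is modelled by vectors of dimension d ('a vec, carrier_vec d)
  with componentwise multiplication; End_k(M) for an n-dimensional space M is
  modelled by n x n matrices (carrier_mat n n).\<close>

definition cmult_vec :: "'a::field vec \<Rightarrow> 'a vec \<Rightarrow> 'a vec" where
  "cmult_vec a b = vec (dim_vec a) (\<lambda>i. a $ i * b $ i)"

definition one_alg :: "nat \<Rightarrow> 'a::field vec" where
  "one_alg d = vec d (\<lambda>_. 1)"

definition mu_L :: "'a::field vec \<Rightarrow> 'a mat" where
  "mu_L a = mat (dim_vec a) (dim_vec a) (\<lambda>(i,j). (cmult_vec a (unit_vec (dim_vec a) j)) $ i)"

definition poly_eval_mat :: "nat \<Rightarrow> 'a::field poly \<Rightarrow> 'a mat \<Rightarrow> 'a mat" where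
  "poly_eval_mat n p X =
     foldr (\<lambda>i acc. coeff p i \<cdot>\<^sub>m (X ^\<^sub>m i) + acc) [0..<Suc (degree p)] (0\<^sub>m n n)"

definition min_poly_mat :: "'a::field mat \<Rightarrow> 'a poly" where
  "min_poly_mat X = (THE p. monic p \<and> poly_eval_mat (dim_row X) p X = 0\<^sub>m (dim_row X) (dim_row X)
      \<and> (\<forall>q. q \<noteq> 0 \<and> poly_eval_mat (dim_row X) q X = 0\<^sub>m (dim_row X) (dim_row X)
               \<longrightarrow> degree p \<le> degree q))"

definition k_linear :: "nat \<Rightarrow> nat \<Rightarrow> ('a::field vec \<Rightarrow> 'a mat) \<Rightarrow> bool" where
  "k_linear d n \<phi> \<longleftrightarrow>
     (\<forall>a \<in> carrier_vec d. \<phi> a \<in> carrier_mat n n) \<and>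
     (\<forall>a \<in> carrier_vec d. \<forall>b \<in> carrier_vec d. \<phi> (a + b) = \<phi> a + \<phi> b) \<and>
     (\<forall>c. \<forall>a \<in> carrier_vec d. \<phi> (c \<cdot>\<^sub>v a) = c \<cdot>\<^sub>m \<phi> a)"

definition characteristic_morphism :: "nat \<Rightarrow> nat \<Rightarrow> ('a::field vec \<Rightarrow> 'a mat) \<Rightarrow> bool" where
  "characteristic_morphism d n \<phi> \<longleftrightarrow> k_linear d n \<phi> \<and>
     (\<forall>a \<in> carrier_vec d. poly_eval_mat n (char_poly (mu_L a)) (\<phi> a) = 0\<^sub>m n n)"

definition min_characteristic_morphism :: "nat \<Rightarrow> nat \<Rightarrow> ('a::field vec \<Rightarrow> 'a mat) \<Rightarrow> bool" where
  "min_characteristic_morphism d n \<phi> \<longleftrightarrow> characteristic_morphism d n \<phi> \<and>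
     (\<forall>a \<in> carrier_vec d. poly_eval_mat n (min_poly_mat (mu_L a)) (\<phi> a) = 0\<^sub>m n n)"

definition unital_alg_hom :: "nat \<Rightarrow> nat \<Rightarrow> ('a::field vec \<Rightarrow> 'a mat) \<Rightarrow> bool" where
  "unital_alg_hom d n \<phi> \<longleftrightarrow> k_linear d n \<phi> \<and>
     \<phi> (one_alg d) = 1\<^sub>m n \<and>
     (\<forall>a \<in> carrier_vec d. \<forall>b \<in> carrier_vec d. \<phi> (cmult_vec a b) = \<phi> a * \<phi> b)"

end

theory Submission
  imports Defs
begin

text \<open>
  Let P_j = \<phi>(e_j) for the standard idempotents e_j of k^d. Left multiplication by a is
  diagonal, so its minimal polynomial is the product of t - v over the distinct entries v of a.
  Hence every P_j and every P_j + P_k is idempotent, which forces P_j and P_k to commute.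
  For j \<noteq> k and a scalar y \<notin> {0, -1} (a d-th root of unity other than -1), the product
  Q = P_j P_k satisfies Q \<phi>(e_j + y e_k) = (1 + y) Q, so evaluating the minimal polynomial of
  e_j + y e_k at \<phi>(e_j + y e_k) multiplies Q by a nonzero scalar: Q = 0. Thus the P_j are
  orthogonal idempotents; \<phi>(1) = 1 because the minimal polynomial of 1 is t - 1, and
  multiplicativity follows by linearity.
\<close>

lemma smult_smult_mat: "a \<cdot>\<^sub>m (b \<cdot>\<^sub>m (A :: 'a::comm_ring_1 mat)) = (a * b) \<cdot>\<^sub>m A"
  by (intro eq_matI) auto

lemma smult_mat_eq_0_cancel:
  fixes A :: "'a::field mat"
  assumes A: "A \<in> carrier_mat n m" and c: "c \<noteq> 0" and cA: "c \<cdot>\<^sub>m A = 0\<^sub>m n m"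
  shows "A = 0\<^sub>m n m"
proof (rule eq_matI)
  fix i j assume "i < dim_row (0\<^sub>m n m :: 'a mat)" "j < dim_col (0\<^sub>m n m :: 'a mat)"
  moreover from this have "(c \<cdot>\<^sub>m A) $$ (i, j) = 0" using cA by simp
  ultimately show "A $$ (i, j) = 0\<^sub>m n m $$ (i, j)" using A c by simp
qed (use A in auto)

lemma eq_if_minus_mat_eq_0:
  fixes A B :: "'a::ab_group_add mat"
  assumes "A \<in> carrier_mat n m" "B \<in> carrier_mat n m" "A - B = 0\<^sub>m n m"
  shows "A = B"
proof (rule eq_matI)
  fix i j assume "i < dim_row B" "j < dim_col B"
  then have "A $$ (i, j) - B $$ (i, j) = (A - B) $$ (i, j)" using assms(1,2) by simp
  also have "\<dots> = 0" using \<open>i < dim_row B\<close> \<open>j < dim_col B\<close> assms by simp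
  finally show "A $$ (i, j) = B $$ (i, j)" by simp
qed (use assms in auto)

text \<open>Expanding (A + B)^2 = A + B gives AB = -BA, and then AB = -ABA = BA.\<close>

lemma commute_if_idempotent_sum:
  fixes A B :: "'a::comm_ring_1 mat"
  assumes A: "A \<in> carrier_mat n n" and B: "B \<in> carrier_mat n n"
    and AA: "A * A = A" and BB: "B * B = B" and sum: "(A + B) * (A + B) = A + B"
  shows "A * B = B * A"
proof -
  have "A + B = (A + B) * (A + B)" using sum by simp
  also have "\<dots> = A + (B * A + (A * B + B))"
    using A B AA BB by (simp add: add_mult_distrib_mat[of _ n n] mult_add_distrib_mat[of _ n n])
  finally have expand: "A + (B * A + (A * B + B)) = A + B" ..
  have anti: "A * B = - (B * A)"
  proof (rule eq_matI)
    fix i j assume "i < dim_row (- (B * A))" "j < dim_col (- (B * A))"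
    then have ij: "i < n" "j < n" using A B by auto
    have "(A + (B * A + (A * B + B))) $$ (i, j) = (A + B) $$ (i, j)" using expand by simp
    then show "(A * B) $$ (i, j) = (- (B * A)) $$ (i, j)"
      using A B ij by (simp del: index_mult_mat(1) add: eq_neg_iff_add_eq_0 algebra_simps)
  qed (use A B in auto)
  have "A * B = A * (A * B)" using A B AA by (simp flip: assoc_mult_mat[of A n n A n B n])
  also have "\<dots> = A * - (B * A)" by (simp only: anti)
  also have "\<dots> = - (A * B) * A" using A B by simp
  also have "\<dots> = B * A * A" using anti A B by simp
  also have "\<dots> = B * A" using A B AA by simp
  finally show ?thesis .
qed

lemma commuting_idempotents_mult_eigen:
  fixes A B :: "'a::comm_ring_1 mat"
  assumes A: "A \<in> carrier_mat n n" and B: "B \<in> carrier_mat n n"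
    and AA: "A * A = A" and BB: "B * B = B" and comm: "A * B = B * A"
  shows "(A * B) * (A + y \<cdot>\<^sub>m B) = (1 + y) \<cdot>\<^sub>m (A * B)"
proof -
  have "(A * B) * (A + y \<cdot>\<^sub>m B) = (A * B) * A + y \<cdot>\<^sub>m ((A * B) * B)"
    using A B by (simp add: mult_add_distrib_mat[of _ n n] mult_smult_distrib[of _ n n B n])
  also have "(A * B) * A = A * B" using A B AA comm by (simp flip: assoc_mult_mat[of A n n A n B n])
  also have "(A * B) * B = A * B" using A B BB by simp
  finally show ?thesis using A B by (intro eq_matI) (auto simp del: index_mult_mat(1) simp: algebra_simps)
qed

lemma poly_eval_mat_carrier:
  assumes "X \<in> carrier_mat n n"
  shows "poly_eval_mat n p X \<in> carrier_mat n n"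
proof -
  have "foldr (\<lambda>i acc. coeff p i \<cdot>\<^sub>m (X ^\<^sub>m i) + acc) xs (0\<^sub>m n n) \<in> carrier_mat n n" for xs
    using assms by (induction xs) auto
  then show ?thesis unfolding poly_eval_mat_def .
qed

lemma mult_pow_mat_eigen:
  fixes X :: "'a::comm_ring_1 mat"
  assumes X: "X \<in> carrier_mat n n" and Q: "Q \<in> carrier_mat n n" and QX: "Q * X = c \<cdot>\<^sub>m Q"
  shows "Q * X ^\<^sub>m i = c ^ i \<cdot>\<^sub>m Q"
proof (induction i)
  case 0
  then show ?case using Q X by (intro eq_matI) auto
next
  case (Suc i)
  have "Q * X ^\<^sub>m Suc i = (Q * X ^\<^sub>m i) * X" using X Q by (simp add: assoc_mult_mat[of Q n n _ n X n])
  also have "\<dots> = c ^ i \<cdot>\<^sub>m (Q * X)" using Suc X Q by (simp add: mult_smult_assoc_mat[of Q n n X n])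
  also have "\<dots> = c ^ Suc i \<cdot>\<^sub>m Q" using QX by (simp add: smult_smult_mat mult.commute)
  finally show ?case .
qed

lemma mult_poly_eval_mat_eigen:
  fixes X :: "'a::field mat"
  assumes X: "X \<in> carrier_mat n n" and Q: "Q \<in> carrier_mat n n" and QX: "Q * X = c \<cdot>\<^sub>m Q"
  shows "Q * poly_eval_mat n p X = poly p c \<cdot>\<^sub>m Q"
proof -
  let ?F = "\<lambda>xs. foldr (\<lambda>i acc. coeff p i \<cdot>\<^sub>m (X ^\<^sub>m i) + acc) xs (0\<^sub>m n n)"
  have "Q * ?F xs = (\<Sum>i\<leftarrow>xs. coeff p i * c ^ i) \<cdot>\<^sub>m Q" for xs
  proof (induction xs)
    case Nil
    then show ?case using Q by (intro eq_matI) auto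
  next
    case (Cons i xs)
    have F: "?F xs \<in> carrier_mat n n" using X by (induction xs) auto
    have "Q * ?F (i # xs) = coeff p i \<cdot>\<^sub>m (Q * X ^\<^sub>m i) + Q * ?F xs"
      using Q X F by (simp add: mult_add_distrib_mat[of Q n n _ n] mult_smult_distrib[of Q n n _ n])
    then show ?case
      using Cons Q by (simp add: mult_pow_mat_eigen[OF X Q QX] smult_smult_mat add_smult_distrib_right_mat)
  qed
  moreover have "(\<Sum>i\<leftarrow>[0..<Suc (degree p)]. coeff p i * c ^ i) = poly p c"
    unfolding poly_altdef atMost_upto by (simp only: interv_sum_list_conv_sum_set_nat)
  ultimately show ?thesis unfolding poly_eval_mat_def by (simp only:)
qed

lemma poly_eval_mat_minus_one_poly:
  assumes "X \<in> carrier_mat n n"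
  shows "poly_eval_mat n [:- 1, 1:] X = X - 1\<^sub>m n"
  using assms unfolding poly_eval_mat_def by (intro eq_matI) auto

lemma poly_eval_mat_idempotent_poly:
  assumes "X \<in> carrier_mat n n"
  shows "poly_eval_mat n [:0, - 1, 1:] X = X * X - X"
  using assms unfolding poly_eval_mat_def
  by (intro eq_matI) (auto simp: upt_rec numeral_2_eq_2)

definition vanishing_poly :: "'a::field vec \<Rightarrow> 'a poly" where
  "vanishing_poly a = (\<Prod>v \<in> set\<^sub>v a. [:- v, 1:])"

lemma finite_vec_set: "finite (set\<^sub>v a)"
  unfolding vec_set_def by simp

lemma monic_vanishing_poly: "monic (vanishing_poly a)"
  unfolding vanishing_poly_def by (simp add: lead_coeff_prod)

lemma degree_vanishing_poly: "degree (vanishing_poly a) = card (set\<^sub>v a)"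
  unfolding vanishing_poly_def by (subst degree_prod_eq_sum_degree) auto

lemma poly_vanishing_poly_eq_0_iff: "poly (vanishing_poly a) x = 0 \<longleftrightarrow> x \<in> set\<^sub>v a"
  unfolding vanishing_poly_def poly_prod using finite_vec_set[of a] by (simp add: prod_zero_iff)

lemma card_le_degree_if_roots:
  fixes p :: "'a::idom poly"
  assumes "p \<noteq> 0" "\<forall>x \<in> S. poly p x = 0"
  shows "card S \<le> degree p"
proof -
  have "card S \<le> card {x. poly p x = 0}"
    using assms by (intro card_mono poly_roots_finite) auto
  also have "\<dots> \<le> degree p" using assms(1) by (rule card_poly_roots_bound)
  finally show ?thesis .
qed

lemma vanishing_poly_unique:
  fixes p :: "'a::field poly"
  assumes monic: "monic p" and deg: "degree p \<le> card (set\<^sub>v a)"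
    and roots: "\<forall>v \<in> set\<^sub>v a. poly p v = 0"
  shows "p = vanishing_poly a"
proof (rule poly_eqI_degree_lead_coeff[of _ "card (set\<^sub>v a)" _ "set\<^sub>v a"])
  have "p \<noteq> 0" using monic by auto
  then have "degree p = card (set\<^sub>v a)" using deg card_le_degree_if_roots[OF _ roots] by fastforce
  then show "coeff p (card (set\<^sub>v a)) = coeff (vanishing_poly a) (card (set\<^sub>v a))"
    using monic monic_vanishing_poly[of a] by (simp add: degree_vanishing_poly)
qed (use deg roots in \<open>auto simp: degree_vanishing_poly poly_vanishing_poly_eq_0_iff\<close>)

lemma mu_L_carrier: "a \<in> carrier_vec d \<Longrightarrow> mu_L a \<in> carrier_mat d d"
  unfolding mu_L_def by auto

lemma index_mu_L:
  "a \<in> carrier_vec d \<Longrightarrow> r < d \<Longrightarrow> c < d \<Longrightarrow> mu_L a $$ (r, c) = (if r = c then a $ r else 0)"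
  unfolding mu_L_def cmult_vec_def by auto

definition diag_unit_mat :: "nat \<Rightarrow> nat \<Rightarrow> 'a::field mat" where
  "diag_unit_mat d i = mat d d (\<lambda>(r, c). if r = i \<and> c = i then 1 else 0)"

lemma dim_diag_unit_mat [simp]:
  "dim_row (diag_unit_mat d i) = d" "dim_col (diag_unit_mat d i) = d"
  unfolding diag_unit_mat_def by simp_all

lemma index_diag_unit_mat [simp]:
  "r < d \<Longrightarrow> c < d \<Longrightarrow> diag_unit_mat d i $$ (r, c) = (if r = i \<and> c = i then 1 else 0)"
  unfolding diag_unit_mat_def by simp

lemma diag_unit_mat_carrier: "diag_unit_mat d i \<in> carrier_mat d d"
  unfolding diag_unit_mat_def by simp

lemma index_diag_unit_mat_mult:
  assumes "M \<in> carrier_mat d m" "i < d" "r < d" "c < m"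
  shows "(diag_unit_mat d i * M) $$ (r, c) = (if r = i then M $$ (i, c) else 0)"
proof -
  have "(diag_unit_mat d i * M) $$ (r, c) = (\<Sum>k<d. (if r = i \<and> k = i then 1 else 0) * M $$ (k, c))"
    using assms by (simp add: diag_unit_mat_def scalar_prod_def atLeast0LessThan)
  also have "\<dots> = (if r = i then M $$ (i, c) else 0)"
    using assms(2) by (simp add: if_distrib[of "\<lambda>x. x * _"] sum.delta cong: if_cong)
  finally show ?thesis .
qed

lemma diag_unit_mat_mult_mu_L:
  assumes a: "a \<in> carrier_vec d" and i: "i < d"
  shows "diag_unit_mat d i * mu_L a = (a $ i) \<cdot>\<^sub>m diag_unit_mat d i"
  using a i mu_L_carrier[OF a]
  by (intro eq_matI)
    (auto simp del: index_mult_mat(1) simp: index_diag_unit_mat_mult index_mu_L)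

lemma poly_eval_mat_mu_L_eq_0_iff:
  fixes a :: "'a::field vec"
  assumes a: "a \<in> carrier_vec d"
  shows "poly_eval_mat d q (mu_L a) = 0\<^sub>m d d \<longleftrightarrow> (\<forall>v \<in> set\<^sub>v a. poly q v = 0)"
proof -
  let ?M = "poly_eval_mat d q (mu_L a)"
  have M: "?M \<in> carrier_mat d d" by (rule poly_eval_mat_carrier[OF mu_L_carrier[OF a]])
  have entry: "?M $$ (i, j) = poly q (a $ i) * (if i = j then 1 else 0)" if "i < d" "j < d" for i j
  proof -
    have "diag_unit_mat d i * ?M = poly q (a $ i) \<cdot>\<^sub>m diag_unit_mat d i"
      using mu_L_carrier[OF a] diag_unit_mat_carrier diag_unit_mat_mult_mu_L[OF a \<open>i < d\<close>]
      by (rule mult_poly_eval_mat_eigen)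
    then have "(diag_unit_mat d i * ?M) $$ (i, j) = (poly q (a $ i) \<cdot>\<^sub>m diag_unit_mat d i) $$ (i, j)"
      by simp
    then show ?thesis
      using M that by (simp del: index_mult_mat(1) add: index_diag_unit_mat_mult)
  qed
  show ?thesis
  proof
    assume zero: "?M = 0\<^sub>m d d"
    show "\<forall>v \<in> set\<^sub>v a. poly q v = 0"
    proof
      fix v assume "v \<in> set\<^sub>v a"
      then obtain i where "a $ i = v" "i < d" using a by (auto elim: vec_setE)
      then show "poly q v = 0" using entry[of i i] zero by simp
    qed
  next
    assume "\<forall>v \<in> set\<^sub>v a. poly q v = 0"
    then have "poly q (a $ i) = 0" if "i < d" for i using a that by (metis carrier_vecD vec_setI)
    then show "?M = 0\<^sub>m d d" using M entry by (intro eq_matI) auto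
  qed
qed

lemma min_poly_mat_mu_L:
  fixes a :: "'a::field vec"
  assumes a: "a \<in> carrier_vec d"
  shows "min_poly_mat (mu_L a) = vanishing_poly a"
proof -
  have dim: "dim_row (mu_L a) = d" using mu_L_carrier[OF a] by simp
  have annihilates: "poly_eval_mat d (vanishing_poly a) (mu_L a) = 0\<^sub>m d d"
    using poly_eval_mat_mu_L_eq_0_iff[OF a] poly_vanishing_poly_eq_0_iff by blast
  have nonzero: "vanishing_poly a \<noteq> 0"
    using monic_vanishing_poly[of a] by auto
  show ?thesis
    unfolding min_poly_mat_def dim
  proof (rule the_equality, intro conjI allI impI)
    fix q :: "'a poly"
    assume "q \<noteq> 0 \<and> poly_eval_mat d q (mu_L a) = 0\<^sub>m d d"
    then show "degree (vanishing_poly a) \<le> degree q"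
      using card_le_degree_if_roots poly_eval_mat_mu_L_eq_0_iff[OF a]
      by (auto simp: degree_vanishing_poly)
  next
    fix p :: "'a poly"
    assume p: "monic p \<and> poly_eval_mat d p (mu_L a) = 0\<^sub>m d d \<and>
      (\<forall>q. q \<noteq> 0 \<and> poly_eval_mat d q (mu_L a) = 0\<^sub>m d d \<longrightarrow> degree p \<le> degree q)"
    then show "p = vanishing_poly a"
      using annihilates nonzero poly_eval_mat_mu_L_eq_0_iff[OF a]
      by (intro vanishing_poly_unique) (auto simp flip: degree_vanishing_poly)
  qed (use annihilates monic_vanishing_poly in auto)
qed

lemma k_linear_carrier: "k_linear d n f \<Longrightarrow> a \<in> carrier_vec d \<Longrightarrow> f a \<in> carrier_mat n n"
  unfolding k_linear_def by blast

lemma k_linear_zero: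
  assumes f: "k_linear d n f"
  shows "f (0\<^sub>v d) = 0\<^sub>m n n"
proof -
  have "f (0\<^sub>v d) = f (0 \<cdot>\<^sub>v 0\<^sub>v d)" by (intro arg_cong[where f = f] eq_vecI) auto
  also have "\<dots> = 0 \<cdot>\<^sub>m f (0\<^sub>v d)" using f unfolding k_linear_def by (meson zero_carrier_vec)
  also have "\<dots> = 0\<^sub>m n n" using k_linear_carrier[OF f zero_carrier_vec] by (intro eq_matI) auto
  finally show ?thesis .
qed

lemma k_linear_eq_on_unit_vecs:
  assumes f: "k_linear d n f" and g: "k_linear d n g"
    and basis: "\<And>k. k < d \<Longrightarrow> f (unit_vec d k) = g (unit_vec d k)"
    and b: "b \<in> carrier_vec d"
  shows "f b = g b"
proof -
  define trunc where "trunc k = vec d (\<lambda>i. if i < k then b $ i else 0)" for k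
  have trunc_Suc: "trunc (Suc k) = trunc k + b $ k \<cdot>\<^sub>v unit_vec d k" if "k < d" for k
    unfolding trunc_def using that by (intro eq_vecI) (auto simp: unit_vec_def less_Suc_eq)
  have "f (trunc k) = g (trunc k)" if "k \<le> d" for k
    using that
  proof (induction k)
    case 0
    have "trunc 0 = 0\<^sub>v d" unfolding trunc_def by auto
    then show ?case using k_linear_zero[OF f] k_linear_zero[OF g] by simp
  next
    case (Suc k)
    have "trunc k \<in> carrier_vec d" unfolding trunc_def by simp
    then show ?case
      using Suc basis f g unfolding trunc_Suc[OF Suc_le_lessD[OF Suc.prems]] k_linear_def by simp
  qed
  moreover have "trunc d = b" unfolding trunc_def using b by (intro eq_vecI) auto
  ultimately show ?thesis by blast
qed

lemma k_linear_mult_left: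
  assumes f: "k_linear d n f" and Q: "Q \<in> carrier_mat n n"
  shows "k_linear d n (\<lambda>b. Q * f b)"
  using assms unfolding k_linear_def
  by (auto simp: mult_add_distrib_mat[OF Q k_linear_carrier[OF f] k_linear_carrier[OF f]]
      mult_smult_distrib[OF Q k_linear_carrier[OF f]])

lemma k_linear_mult_right:
  assumes f: "k_linear d n f" and Q: "Q \<in> carrier_mat n n"
  shows "k_linear d n (\<lambda>b. f b * Q)"
  using assms unfolding k_linear_def
  by (auto simp: add_mult_distrib_mat[OF k_linear_carrier[OF f] k_linear_carrier[OF f] Q]
      mult_smult_assoc_mat[OF k_linear_carrier[OF f] Q])

lemma k_linear_coordinate:
  assumes P: "P \<in> carrier_mat n n" and j: "j < d"
  shows "k_linear d n (\<lambda>b. b $ j \<cdot>\<^sub>m P)"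
  using assms unfolding k_linear_def
  by (auto simp: add_smult_distrib_right_mat smult_smult_mat)

lemma k_linear_cmult_vec:
  assumes f: "k_linear d n f" and b: "b \<in> carrier_vec d"
  shows "k_linear d n (\<lambda>a. f (cmult_vec a b))"
proof -
  have carrier: "cmult_vec a b \<in> carrier_vec d" if "a \<in> carrier_vec d" for a
    using that unfolding cmult_vec_def by simp
  have "cmult_vec (a + a') b = cmult_vec a b + cmult_vec a' b"
    if "a \<in> carrier_vec d" "a' \<in> carrier_vec d" for a a'
    using that b unfolding cmult_vec_def by (intro eq_vecI) (auto simp: distrib_right)
  moreover have "cmult_vec (c \<cdot>\<^sub>v a) b = c \<cdot>\<^sub>v cmult_vec a b" for c a
    unfolding cmult_vec_def by (intro eq_vecI) auto
  ultimately show ?thesis using f carrier unfolding k_linear_def by auto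
qed

context
  fixes d n :: nat and \<phi> :: "'a::field vec \<Rightarrow> 'a mat"
  assumes \<phi>: "min_characteristic_morphism d n \<phi>"
begin

lemma min_char_morphism_k_linear: "k_linear d n \<phi>"
  using \<phi> unfolding min_characteristic_morphism_def characteristic_morphism_def by blast

lemma min_char_morphism_vanishing_poly:
  "a \<in> carrier_vec d \<Longrightarrow> poly_eval_mat n (vanishing_poly a) (\<phi> a) = 0\<^sub>m n n"
  using \<phi> min_poly_mat_mu_L unfolding min_characteristic_morphism_def by metis

lemma min_char_morphism_one_alg:
  assumes "1 \<le> d"
  shows "\<phi> (one_alg d) = 1\<^sub>m n"
proof -
  have one: "one_alg d \<in> carrier_vec d" unfolding one_alg_def by simp
  have entries: "set\<^sub>v (one_alg d) = {1}"
    using assms unfolding one_alg_def vec_set_def by (auto intro: image_eqI[of _ _ 0])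
  have X: "\<phi> (one_alg d) \<in> carrier_mat n n" using k_linear_carrier[OF min_char_morphism_k_linear one] .
  have "vanishing_poly (one_alg d) = [:- 1, 1:]" unfolding vanishing_poly_def entries by simp
  then have "\<phi> (one_alg d) - 1\<^sub>m n = 0\<^sub>m n n"
    using min_char_morphism_vanishing_poly[OF one] poly_eval_mat_minus_one_poly[OF X] by metis
  then show ?thesis using X by (auto intro: eq_if_minus_mat_eq_0)
qed

lemma min_char_morphism_idempotent:
  assumes "1 \<le> d" and a: "a \<in> carrier_vec d" and zero_one: "set\<^sub>v a \<subseteq> {0, 1}"
  shows "\<phi> a * \<phi> a = \<phi> a"
proof -
  have X: "\<phi> a \<in> carrier_mat n n" using k_linear_carrier[OF min_char_morphism_k_linear a] .
  have entry: "a $ i \<in> set\<^sub>v a" if "i < d" for i using a that by (metis carrier_vecD vec_setI)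
  consider "1 \<notin> set\<^sub>v a" | "0 \<notin> set\<^sub>v a" | "set\<^sub>v a = {0, 1}" using zero_one by blast
  then show ?thesis
  proof cases
    case 1
    then have "a = 0\<^sub>v d" using a zero_one entry by (intro eq_vecI) fastforce+
    then show ?thesis using k_linear_zero[OF min_char_morphism_k_linear] by simp
  next
    case 2
    then have "a = one_alg d" using a zero_one entry unfolding one_alg_def by (intro eq_vecI) fastforce+
    then show ?thesis using min_char_morphism_one_alg[OF \<open>1 \<le> d\<close>] by simp
  next
    case 3
    then have "vanishing_poly a = [:0, - 1, 1:]" unfolding vanishing_poly_def by simp
    then have "\<phi> a * \<phi> a - \<phi> a = 0\<^sub>m n n"
      using min_char_morphism_vanishing_poly[OF a] X by (simp add: poly_eval_mat_idempotent_poly)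
    then show ?thesis using X by (auto intro: eq_if_minus_mat_eq_0)
  qed
qed

lemma min_char_morphism_unit_vec_idempotent:
  assumes "j < d"
  shows "\<phi> (unit_vec d j) * \<phi> (unit_vec d j) = \<phi> (unit_vec d j)"
  using assms by (intro min_char_morphism_idempotent) (auto simp: vec_set_def unit_vec_def)

lemma min_char_morphism_unit_vecs_commute:
  assumes j: "j < d" and k: "k < d" and "j \<noteq> k"
  shows "\<phi> (unit_vec d j) * \<phi> (unit_vec d k) = \<phi> (unit_vec d k) * \<phi> (unit_vec d j)"
proof -
  have lin: "k_linear d n \<phi>" by (rule min_char_morphism_k_linear)
  have "\<phi> (unit_vec d j + unit_vec d k) * \<phi> (unit_vec d j + unit_vec d k)
      = \<phi> (unit_vec d j + unit_vec d k)"
    using j k \<open>j \<noteq> k\<close> by (intro min_char_morphism_idempotent)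
      (auto simp: vec_set_def unit_vec_def split: if_splits)
  then show ?thesis
    using lin j k unfolding k_linear_def
    by (intro commute_if_idempotent_sum[of _ n] min_char_morphism_unit_vec_idempotent) auto
qed

lemma min_char_morphism_unit_vecs_orthogonal:
  fixes y :: 'a
  assumes j: "j < d" and k: "k < d" and "j \<noteq> k" and y: "y \<noteq> 0" "y \<noteq> - 1"
  shows "\<phi> (unit_vec d j) * \<phi> (unit_vec d k) = 0\<^sub>m n n"
proof -
  have lin: "k_linear d n \<phi>" by (rule min_char_morphism_k_linear)
  define a where "a = unit_vec d j + y \<cdot>\<^sub>v unit_vec d k"
  define Q where "Q = \<phi> (unit_vec d j) * \<phi> (unit_vec d k)"
  have a: "a \<in> carrier_vec d" unfolding a_def by simp
  have P: "\<phi> (unit_vec d i) \<in> carrier_mat n n" for i using k_linear_carrier[OF lin] by simp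
  have Q: "Q \<in> carrier_mat n n" unfolding Q_def using mult_carrier_mat[OF P P] .
  have "\<phi> a = \<phi> (unit_vec d j) + y \<cdot>\<^sub>m \<phi> (unit_vec d k)"
    using lin unfolding a_def k_linear_def by simp
  then have "Q * \<phi> a = (1 + y) \<cdot>\<^sub>m Q"
    unfolding Q_def using j k \<open>j \<noteq> k\<close>
    by (simp add: commuting_idempotents_mult_eigen[OF P P] min_char_morphism_unit_vec_idempotent
        min_char_morphism_unit_vecs_commute)
  then have "Q * poly_eval_mat n (vanishing_poly a) (\<phi> a) = poly (vanishing_poly a) (1 + y) \<cdot>\<^sub>m Q"
    using k_linear_carrier[OF lin a] Q by (intro mult_poly_eval_mat_eigen)
  then have "poly (vanishing_poly a) (1 + y) \<cdot>\<^sub>m Q = 0\<^sub>m n n"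
    using min_char_morphism_vanishing_poly[OF a] Q by simp
  moreover have "1 + y \<notin> set\<^sub>v a"
    using y \<open>j \<noteq> k\<close> unfolding a_def vec_set_def
    by (auto simp: unit_vec_def add_eq_0_iff split: if_splits)
  ultimately have "Q = 0\<^sub>m n n"
    using Q by (metis smult_mat_eq_0_cancel poly_vanishing_poly_eq_0_iff)
  then show ?thesis unfolding Q_def .
qed

lemma min_char_morphism_unit_vec_mult:
  assumes j: "j < d" and b: "b \<in> carrier_vec d"
    and third_scalar: "2 \<le> d \<Longrightarrow> \<exists>y::'a. y \<noteq> 0 \<and> y \<noteq> - 1"
  shows "\<phi> (unit_vec d j) * \<phi> b = b $ j \<cdot>\<^sub>m \<phi> (unit_vec d j)"
proof -
  have lin: "k_linear d n \<phi>" by (rule min_char_morphism_k_linear)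
  have P: "\<phi> (unit_vec d i) \<in> carrier_mat n n" for i using k_linear_carrier[OF lin] by simp
  show ?thesis
  proof (rule k_linear_eq_on_unit_vecs[OF k_linear_mult_left[OF lin P] k_linear_coordinate[OF P j] _ b])
    fix k assume k: "k < d"
    show "\<phi> (unit_vec d j) * \<phi> (unit_vec d k) = unit_vec d k $ j \<cdot>\<^sub>m \<phi> (unit_vec d j)"
    proof (cases "j = k")
      case True
      then show ?thesis using j P by (intro eq_matI) (auto simp: min_char_morphism_unit_vec_idempotent)
    next
      case False
      with j k third_scalar obtain y :: 'a where "y \<noteq> 0" "y \<noteq> - 1" by fastforce
      then show ?thesis using j k False P[of j]
        by (intro eq_matI) (auto simp: min_char_morphism_unit_vecs_orthogonal)
    qed
  qed
qed

lemma min_char_morphism_mult: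
  assumes a: "a \<in> carrier_vec d" and b: "b \<in> carrier_vec d"
    and third_scalar: "2 \<le> d \<Longrightarrow> \<exists>y::'a. y \<noteq> 0 \<and> y \<noteq> - 1"
  shows "\<phi> (cmult_vec a b) = \<phi> a * \<phi> b"
proof -
  have lin: "k_linear d n \<phi>" by (rule min_char_morphism_k_linear)
  show ?thesis
  proof (rule k_linear_eq_on_unit_vecs[OF k_linear_cmult_vec[OF lin b]
        k_linear_mult_right[OF lin k_linear_carrier[OF lin b]] _ a])
    fix k assume k: "k < d"
    have "cmult_vec (unit_vec d k) b = b $ k \<cdot>\<^sub>v unit_vec d k"
      using b unfolding cmult_vec_def by (intro eq_vecI) (auto simp: unit_vec_def)
    then show "\<phi> (cmult_vec (unit_vec d k) b) = \<phi> (unit_vec d k) * \<phi> b"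
      using lin k b third_scalar unfolding k_linear_def by (simp add: min_char_morphism_unit_vec_mult)
  qed
qed

lemma min_char_morphism_unital_alg_hom:
  assumes "1 \<le> d" and "2 \<le> d \<Longrightarrow> \<exists>y::'a. y \<noteq> 0 \<and> y \<noteq> - 1"
  shows "unital_alg_hom d n \<phi>"
  unfolding unital_alg_hom_def
  using assms min_char_morphism_k_linear min_char_morphism_one_alg min_char_morphism_mult by blast

end

lemma roots_of_unity_exists_ne_0_minus_1:
  assumes "card {x::'a::field. x ^ d = 1} = d" and "2 \<le> d"
  shows "\<exists>y::'a. y \<noteq> 0 \<and> y \<noteq> - 1"
proof -
  have "\<not> {x::'a. x ^ d = 1} \<subseteq> {- 1}"
    using assms card_mono[of "{- 1::'a}" "{x. x ^ d = 1}"] by auto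
  then obtain y :: 'a where "y ^ d = 1" "y \<noteq> - 1" by blast
  then show ?thesis using \<open>2 \<le> d\<close> by (intro exI[of _ y]) (auto simp: power_0_left)
qed

theorem mainTheorem2:
  fixes \<phi> :: "'a::field vec \<Rightarrow> 'a mat" and d n :: nat
  assumes "d \<ge> 1"
    and "card {x::'a. x ^ d = 1} = d"
    and "min_characteristic_morphism d n \<phi>"
  shows "unital_alg_hom d n \<phi>"
  using assms by (intro min_char_morphism_unital_alg_hom roots_of_unity_exists_ne_0_minus_1)

end
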